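(* Consider the following regulation game. A random triple $(\theta,s,d)$ (agent type, training state, deployment state) has joint distribution $\pi$. Prediction functions are vectors $f\in\mathbb{R}^n$. Given $s$ (and $\theta$), expected agent utility and expected principal welfare are $\overline{U}_\theta(f;s) = -(f-\bar u)'\overline{\Omega}_U(f-\bar u)$ and $\overline{W}(f;s) = -(f-\bar w)'\overline{\Omega}_W(f-\bar w)$ with $\bar u=\bar u(s,\theta)$, $\bar w=\bar w(s)\in\mathbb{R}^n$. The principal first (knowing only $\pi$) chooses a linear explainer, i.e. a $k\times n$ real matrix $\mathcal{E}$ ($k<n$), and possibly an ex-ante restriction $\mathcal{F}=\{f\in\mathbb{R}^n: Af=a\}$ with $A\in\mathbb{R}^{m\times n}$, $a\in\mathbb{R}^m$ not depending on $s$ or $\theta$; she then, after observing $s$, dictates the value of the explanation $\mathcal{E}f=e(s)$ (a failed audit has infinite cost to the agent). The agent, knowing $\theta$ and $s$, chooses $f$ maximizing $\overline{U}_\theta(f;s)$ subject to $Af=a$ and $\mathcal{E}f=e(s)$. The principal chooses her instruments to maximize $\mathop{E}_\pi[\overline{W}(f;s)]$. A restriction is called fully explainable if, together with the explainer, it determines $f$ completely (i.e. $f$ is restricted to a $k$-dimensional space on which $\mathcal{E}$ is fully informative, e.g. $A$ of rank $n-k$). Assume $\overline{\Omega}_U=\overline{\Omega}_W$ and both are constant (non-random) and positive definite almost surely. If $\operatorname{Var}_\pi(\bar w) \succ \mathop{E}_\pi[(\bar u-\bar w)(\bar u-\bar w)']$ (in the positive definite order), then restricting the agent to fully explainable functions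 is never optimal for any $k<n$; indeed it is dominated (in expected welfare) by not restricting the agent ex-ante at all.
   Context: $\succ$ denotes the order on symmetric matrices given by positive definiteness of the difference. *)

theory Defs
  imports "HOL-Probability.Probability"
begin

definition pos_def_mat :: "real^'n^'n \<Rightarrow> bool" where
  "pos_def_mat Q \<longleftrightarrow> transpose Q = Q \<and> (\<forall>x. x \<noteq> 0 \<longrightarrow> x \<bullet> (Q *v x) > 0)"

definition loewner_gt :: "real^'n^'n \<Rightarrow> real^'n^'n \<Rightarrow> bool" where
  "loewner_gt P Q \<longleftrightarrow> pos_def_mat (P - Q)"

definition mean_vec :: "'w measure \<Rightarrow> ('w \<Rightarrow> real^'n) \<Rightarrow> real^'n" where
  "mean_vec M X = (\<chi> i. integral\<^sup>L M (\<lambda>\<omega>. X \<omega> $ i))"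

definition var_matrix :: "'w measure \<Rightarrow> ('w \<Rightarrow> real^'n) \<Rightarrow> real^'n^'n" where
  "var_matrix M X = (\<chi> i j. integral\<^sup>L M
      (\<lambda>\<omega>. (X \<omega> $ i - mean_vec M X $ i) * (X \<omega> $ j - mean_vec M X $ j)))"

definition second_moment :: "'w measure \<Rightarrow> ('w \<Rightarrow> real^'n) \<Rightarrow> real^'n^'n" where
  "second_moment M X = (\<chi> i j. integral\<^sup>L M (\<lambda>\<omega>. X \<omega> $ i * X \<omega> $ j))"

definition quad_loss :: "real^'n^'n \<Rightarrow> real^'n \<Rightarrow> real^'n \<Rightarrow> real" where
  "quad_loss Q c f = (f - c) \<bullet> (Q *v (f - c))"

definition quad_util :: "real^'n^'n \<Rightarrow> real^'n \<Rightarrow> real^'n \<Rightarrow> real" where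
  "quad_util Q c f = - quad_loss Q c f"

definition agent_best :: "real^'n^'n \<Rightarrow> real^'n \<Rightarrow> (real^'n \<Rightarrow> bool) \<Rightarrow> real^'n \<Rightarrow> bool" where
  "agent_best Q u C f \<longleftrightarrow> C f \<and> (\<forall>g. C g \<longrightarrow> quad_util Q u g \<le> quad_util Q u f)"

definition fully_explainable :: "real^'n^'k \<Rightarrow> real^'n^'m \<Rightarrow> real^'m \<Rightarrow> bool" where
  "fully_explainable E A a \<longleftrightarrow>
     (\<forall>x y. A *v x = a \<longrightarrow> A *v y = a \<longrightarrow> E *v x = E *v y \<longrightarrow> x = y)"

end

theory Submission
  imports Defs
begin

text \<open>
  Let \<open>K\<close> be the kernel of an explainer \<open>E'\<close>. If the principal dictates \<open>E' f = E' w\<close>, the agent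
  is free on \<open>w + K\<close> and picks \<open>w + P (u - w)\<close>, where \<open>P\<close> is the \<open>Om\<close>-orthogonal projection
  onto \<open>K\<close>, so the principal loses \<open>|P (u - w)|\<^sup>2\<close>. If \<open>K\<close> is \<open>Om\<close>-orthogonal to \<open>ker A\<close>,
  then \<open>P (f - w) = P (a0 - w)\<close> for every \<open>f\<close> with \<open>A f = a\<close>, so by Bessel's inequality the
  restricted agent costs at least \<open>|P (a0 - w)|\<^sup>2\<close> for one fixed \<open>a0\<close>. Composing \<open>E\<close> with the
  projection onto \<open>ker A\<close> yields such an \<open>E'\<close>, since full explainability makes \<open>E\<close> injective
  on \<open>ker A\<close>; its kernel is nontrivial because \<open>k < n\<close>. Finally, for \<open>v = Om t\<close> with \<open>t\<close> in
  an \<open>Om\<close>-orthonormal basis of \<open>K\<close>,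
  \<open>E (v \<bullet> (u - w))\<^sup>2 = v' E[(u - w)(u - w)'] v < v' Var(w) v \<le> E (v \<bullet> (a0 - w))\<^sup>2\<close>,
  the last step because the mean minimises the expected squared deviation.
\<close>

definition mat_inner :: "real^'n^'n \<Rightarrow> real^'n \<Rightarrow> real^'n \<Rightarrow> real" where
  "mat_inner Om x y = x \<bullet> (Om *v y)"

lemma bilinear_mat_inner: "bilinear (mat_inner Om)"
  by (simp add: bilinear_def mat_inner_def linear_iff inner_add_left inner_add_right
      matrix_vector_right_distrib matrix_vector_mult_scaleR)

lemmas mat_inner_add_left = bilinear_ladd[OF bilinear_mat_inner]
  and mat_inner_add_right = bilinear_radd[OF bilinear_mat_inner]
  and mat_inner_diff_right = bilinear_rsub[OF bilinear_mat_inner]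
  and mat_inner_scaleR_left = bilinear_lmul[OF bilinear_mat_inner, simplified]
  and mat_inner_scaleR_right = bilinear_rmul[OF bilinear_mat_inner, simplified]
  and mat_inner_zero_left [simp] = bilinear_lzero[OF bilinear_mat_inner]

lemma mat_inner_sum_left: "mat_inner Om (\<Sum>i\<in>I. f i) y = (\<Sum>i\<in>I. mat_inner Om (f i) y)"
  by (simp add: mat_inner_def inner_sum_left)

lemma mat_inner_sum_right: "mat_inner Om x (\<Sum>i\<in>I. f i) = (\<Sum>i\<in>I. mat_inner Om x (f i))"
  by (simp add: mat_inner_def inner_sum_right linear_sum[OF matrix_vector_mul_linear])

lemma quad_loss_eq_mat_inner: "quad_loss Om c f = mat_inner Om (f - c) (f - c)"
  by (simp add: quad_loss_def mat_inner_def)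

definition mat_orthonormal :: "real^'n^'n \<Rightarrow> (real^'n) set \<Rightarrow> bool" where
  "mat_orthonormal Om T \<longleftrightarrow> (\<forall>s\<in>T. \<forall>t\<in>T. mat_inner Om s t = (if s = t then 1 else 0))"

definition mat_proj :: "real^'n^'n \<Rightarrow> (real^'n) set \<Rightarrow> real^'n \<Rightarrow> real^'n" where
  "mat_proj Om T x = (\<Sum>t\<in>T. mat_inner Om t x *\<^sub>R t)"

lemma mat_inner_orthonormal_sum:
  assumes "mat_orthonormal Om T" "finite T" "s \<in> T"
  shows "mat_inner Om s (\<Sum>t\<in>T. c t *\<^sub>R t) = c s"
proof -
  have "mat_inner Om s (\<Sum>t\<in>T. c t *\<^sub>R t) = (\<Sum>t\<in>T. if s = t then c t else 0)"
    using assms(1,3) unfolding mat_orthonormal_def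
    by (auto simp: mat_inner_sum_right mat_inner_scaleR_right intro: sum.cong)
  then show ?thesis using assms(2,3) by simp
qed

lemma mat_proj_in_span: "mat_proj Om T x \<in> span T"
  unfolding mat_proj_def by (intro span_sum span_scale span_base)

lemma linear_mat_proj: "linear (mat_proj Om T)"
  by (rule linearI)
    (simp_all add: mat_proj_def mat_inner_add_right mat_inner_scaleR_right scaleR_add_left
      sum.distrib scaleR_sum_right)

lemma mat_inner_proj_residual:
  assumes "mat_orthonormal Om T" "finite T" "z \<in> span T"
  shows "mat_inner Om z (x - mat_proj Om T x) = 0"
proof -
  have "subspace {z. mat_inner Om z (x - mat_proj Om T x) = 0}"
    by (simp add: subspace_def mat_inner_add_left mat_inner_scaleR_left)
  moreover have "mat_inner Om t (x - mat_proj Om T x) = 0" if "t \<in> T" for t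
    using mat_inner_orthonormal_sum[OF assms(1,2) that, of "\<lambda>t. mat_inner Om t x"]
    by (simp add: mat_proj_def mat_inner_diff_right)
  ultimately show ?thesis
    using span_induct[OF assms(3)] by blast
qed

lemma mat_inner_proj_self:
  assumes "mat_orthonormal Om T" "finite T"
  shows "mat_inner Om (mat_proj Om T x) (mat_proj Om T x) = (\<Sum>t\<in>T. (mat_inner Om t x)\<^sup>2)"
proof -
  have "mat_inner Om (mat_proj Om T x) (mat_proj Om T x)
      = (\<Sum>s\<in>T. mat_inner Om s x * mat_inner Om s (mat_proj Om T x))"
    by (simp add: mat_proj_def[of Om T x] mat_inner_sum_left mat_inner_scaleR_left)
  also have "\<dots> = (\<Sum>t\<in>T. (mat_inner Om t x)\<^sup>2)"
    using mat_inner_orthonormal_sum[OF assms, of _ "\<lambda>t. mat_inner Om t x"]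
    by (simp add: mat_proj_def power2_eq_square)
  finally show ?thesis .
qed

lemma quad_loss_mat_proj:
  assumes "mat_orthonormal Om T" "finite T"
  shows "quad_loss Om w (w + mat_proj Om T (u - w)) = (\<Sum>t\<in>T. (mat_inner Om t (u - w))\<^sup>2)"
  by (simp add: quad_loss_eq_mat_inner mat_inner_proj_self[OF assms])

context
  fixes Om :: "real^'n^'n"
  assumes pd: "pos_def_mat Om"
begin

lemma mat_inner_commute: "mat_inner Om x y = mat_inner Om y x"
  using pd unfolding mat_inner_def pos_def_mat_def
  by (metis dot_lmul_matrix inner_commute transpose_matrix_vector)

lemma mat_inner_eq_inner_left: "mat_inner Om x y = (Om *v x) \<bullet> y"
  by (metis mat_inner_commute mat_inner_def inner_commute)

lemma mat_inner_self_pos: "x \<noteq> 0 \<Longrightarrow> mat_inner Om x x > 0"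
  using pd unfolding mat_inner_def pos_def_mat_def by auto

lemma mat_inner_self_nonneg: "mat_inner Om x x \<ge> 0"
  using mat_inner_self_pos[of x] by (cases "x = 0") auto

lemma mat_inner_pythagoras:
  "mat_inner Om x y = 0 \<Longrightarrow> mat_inner Om (x + y) (x + y) = mat_inner Om x x + mat_inner Om y y"
  by (simp add: mat_inner_add_left mat_inner_add_right mat_inner_commute[of y x])

lemma mat_bessel_inequality:
  assumes "mat_orthonormal Om T" "finite T"
  shows "(\<Sum>t\<in>T. (mat_inner Om t x)\<^sup>2) \<le> mat_inner Om x x"
proof -
  let ?r = "x - mat_proj Om T x"
  have "mat_inner Om x x = mat_inner Om (mat_proj Om T x + ?r) (mat_proj Om T x + ?r)"
    by simp
  also have "\<dots> = (\<Sum>t\<in>T. (mat_inner Om t x)\<^sup>2) + mat_inner Om ?r ?r"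
    using mat_inner_pythagoras[OF mat_inner_proj_residual[OF assms mat_proj_in_span[of Om T x],
          where x = x]]
    by (simp add: mat_inner_proj_self[OF assms])
  finally show ?thesis using mat_inner_self_nonneg[of ?r] by linarith
qed

lemma mat_orthonormal_insert:
  assumes "mat_orthonormal Om T" "finite T"
  obtains T' where "finite T'" "mat_orthonormal Om T'" "span T' = span (insert x T)"
proof (cases "x \<in> span T")
  case True
  then show ?thesis using that[of T] assms by (simp add: span_redundant)
next
  case False
  define v where "v = x - mat_proj Om T x"
  define r where "r = sqrt (mat_inner Om v v)"
  define t0 where "t0 = (1 / r) *\<^sub>R v"
  have "v \<noteq> 0" using False mat_proj_in_span[of Om T x] by (auto simp: v_def)
  then have r: "r > 0" "r\<^sup>2 = mat_inner Om v v"
    using mat_inner_self_pos[of v] by (simp_all add: r_def)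
  have t0_norm: "mat_inner Om t0 t0 = 1"
    using r by (simp add: t0_def mat_inner_scaleR_left mat_inner_scaleR_right flip: r(2))
      (simp add: power2_eq_square)
  have t0_orth: "mat_inner Om t t0 = 0" "mat_inner Om t0 t = 0" if "t \<in> T" for t
    using mat_inner_proj_residual[OF assms span_base[OF that], of x]
    by (simp_all add: t0_def v_def mat_inner_scaleR_left mat_inner_scaleR_right
        mat_inner_commute[of "x - mat_proj Om T x" t])
  then have "t0 \<notin> T" using t0_norm by force
  with assms t0_norm t0_orth have "mat_orthonormal Om (insert t0 T)"
    unfolding mat_orthonormal_def by auto
  moreover have "span (insert t0 T) = span (insert x T)"
  proof -
    have p: "mat_proj Om T x \<in> span (insert y T)" for y
      using span_mono[of T "insert y T"] mat_proj_in_span[of Om T x] by blast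
    have "t0 \<in> span (insert x T)"
      unfolding t0_def v_def by (intro span_scale span_diff p span_base) simp
    moreover have "x = r *\<^sub>R t0 + mat_proj Om T x"
      using r(1) by (simp add: t0_def v_def)
    then have "x \<in> span (insert t0 T)"
      by (metis p span_add span_base span_scale insertI1)
    ultimately show ?thesis
      by (simp add: span_eq subset_iff span_base)
  qed
  ultimately show ?thesis using that assms(2) by blast
qed

lemma mat_orthonormal_basis_exists:
  assumes "subspace V"
  obtains T where "finite T" "mat_orthonormal Om T" "span T = V"
proof -
  obtain B where B: "B \<subseteq> V" "independent B" "V \<subseteq> span B"
    by (rule basis_exists)
  have "\<exists>T. finite T \<and> mat_orthonormal Om T \<and> span T = span B"
    using finiteI_independent[OF B(2)]
  proof (induction B rule: finite_induct)
    case empty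
    show ?case by (intro exI[of _ "{}"]) (simp add: mat_orthonormal_def)
  next
    case (insert x B)
    then obtain T where T: "mat_orthonormal Om T" "finite T" "span T = span B" by blast
    obtain T' where "finite T'" "mat_orthonormal Om T'" "span T' = span (insert x T)"
      using mat_orthonormal_insert[OF T(1,2)] by blast
    moreover have "span (insert x T) = span (insert x B)"
      using T(3) by (metis span_insert)
    ultimately show ?case by auto
  qed
  moreover have "span B = V"
    using B span_minimal[OF B(1) assms] by blast
  ultimately show ?thesis using that by blast
qed

lemma agent_best_mat_proj:
  assumes "mat_orthonormal Om T" "finite T"
  shows "agent_best Om u (\<lambda>g. g - w \<in> span T) (w + mat_proj Om T (u - w))"
  unfolding agent_best_def
proof (intro conjI allI impI)
  define f where "f = w + mat_proj Om T (u - w)"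
  show "f - w \<in> span T" by (simp add: f_def mat_proj_in_span)
  fix g assume "g - w \<in> span T"
  moreover have "g - f = (g - w) - mat_proj Om T (u - w)" by (simp add: f_def)
  ultimately have "g - f \<in> span T"
    using mat_proj_in_span span_diff by metis
  have "f - u = - (u - w - mat_proj Om T (u - w))" by (simp add: f_def)
  then have "mat_inner Om (g - f) (f - u) = - mat_inner Om (g - f) (u - w - mat_proj Om T (u - w))"
    by (metis bilinear_rneg[OF bilinear_mat_inner])
  also have "\<dots> = 0"
    using mat_inner_proj_residual[OF assms \<open>g - f \<in> span T\<close>] by simp
  finally have "mat_inner Om (g - f) (f - u) = 0" .
  then have "mat_inner Om ((g - f) + (f - u)) ((g - f) + (f - u))
      = mat_inner Om (g - f) (g - f) + mat_inner Om (f - u) (f - u)"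
    by (rule mat_inner_pythagoras)
  then show "quad_util Om u g \<le> quad_util Om u f"
    using mat_inner_self_nonneg[of "g - f"]
    by (simp add: quad_util_def quad_loss_eq_mat_inner)
qed

lemma quad_loss_restricted_ge:
  assumes "mat_orthonormal Om T" "finite T"
    and orth: "\<And>t l. t \<in> T \<Longrightarrow> A *v l = 0 \<Longrightarrow> mat_inner Om t l = 0"
    and "A *v a0 = a" "A *v x = a"
  shows "(\<Sum>t\<in>T. (mat_inner Om t (a0 - w))\<^sup>2) \<le> quad_loss Om w x"
proof -
  have "mat_inner Om t (x - w) = mat_inner Om t (a0 - w)" if "t \<in> T" for t
    using orth[OF that, of "x - a0"] assms(4,5)
    by (simp add: matrix_vector_mult_diff_distrib mat_inner_diff_right)
  then have "(\<Sum>t\<in>T. (mat_inner Om t (a0 - w))\<^sup>2) = (\<Sum>t\<in>T. (mat_inner Om t (x - w))\<^sup>2)"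
    by simp
  also have "\<dots> \<le> quad_loss Om w x"
    using mat_bessel_inequality[OF assms(1,2)] by (simp add: quad_loss_eq_mat_inner)
  finally show ?thesis .
qed

lemma fully_explainable_orthogonal_explainer:
  fixes E :: "real^'n^'k" and A :: "real^'n^'m"
  assumes fe: "fully_explainable E A a" and a0: "A *v a0 = a"
  obtains E' :: "real^'n^'k"
    where "\<And>x l. E' *v x = 0 \<Longrightarrow> A *v l = 0 \<Longrightarrow> mat_inner Om x l = 0"
proof -
  have "subspace {l. A *v l = 0}"
    by (simp add: subspace_def matrix_vector_right_distrib matrix_vector_mult_scaleR)
  then obtain TL where TL: "finite TL" "mat_orthonormal Om TL" "span TL = {l. A *v l = 0}"
    using mat_orthonormal_basis_exists by blast
  define E' where "E' = matrix (\<lambda>x. E *v mat_proj Om TL x)"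
  have E': "E' *v x = E *v mat_proj Om TL x" for x
    unfolding E'_def
    by (rule matrix_works)
      (simp add: linear_matrix_vector_mul_eq linear_compose[OF linear_mat_proj, unfolded o_def])
  have "mat_inner Om x l = 0" if "E' *v x = 0" "A *v l = 0" for x l
  proof -
    have "A *v (a0 + mat_proj Om TL x) = a" "E *v (a0 + mat_proj Om TL x) = E *v a0"
      using a0 mat_proj_in_span[of Om TL x] TL(3) that(1)
      by (auto simp: E' matrix_vector_right_distrib)
    then have "mat_proj Om TL x = 0"
      using fe a0 unfolding fully_explainable_def by force
    then have "mat_inner Om l x = 0"
      using mat_inner_proj_residual[OF TL(2,1), of l x] TL(3) that(2) by simp
    then show ?thesis by (simp add: mat_inner_commute)
  qed
  then show ?thesis using that by blast
qed

lemma orthogonal_explainer_kernel_basis: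
  fixes E :: "real^'n^'k" and A :: "real^'n^'m"
  assumes "fully_explainable E A a" "A *v a0 = a" and k_less_n: "CARD('k) < CARD('n)"
  obtains E' :: "real^'n^'k" and T
  where "finite T" "T \<noteq> {}" "mat_orthonormal Om T" "span T = {x. E' *v x = 0}"
    and "\<And>t l. t \<in> T \<Longrightarrow> A *v l = 0 \<Longrightarrow> mat_inner Om t l = 0"
proof -
  obtain E' :: "real^'n^'k"
    where orth: "\<And>x l. E' *v x = 0 \<Longrightarrow> A *v l = 0 \<Longrightarrow> mat_inner Om x l = 0"
    using fully_explainable_orthogonal_explainer[OF assms(1,2)] by blast
  have "subspace {x. E' *v x = 0}"
    by (simp add: subspace_def matrix_vector_right_distrib matrix_vector_mult_scaleR)
  then obtain T where T: "finite T" "mat_orthonormal Om T" "span T = {x. E' *v x = 0}"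
    using mat_orthonormal_basis_exists by blast
  have "rank E' \<noteq> CARD('n)"
    using rank_bound[of E'] k_less_n by linarith
  then obtain x where "x \<noteq> 0" "E' *v x = 0"
    using matrix_nonfull_linear_equations_eq[of E'] by blast
  then have "T \<noteq> {}" using T(3) span_empty by blast
  moreover have "mat_inner Om t l = 0" if "t \<in> T" "A *v l = 0" for t l
  proof -
    have "E' *v t = 0" using span_base[OF that(1)] T(3) by blast
    then show ?thesis using orth that(2) by blast
  qed
  ultimately show ?thesis by (rule that[OF T(1) _ T(2,3)])
qed

end

lemma borel_measurable_vec_nth:
  "Z \<in> borel_measurable M \<Longrightarrow> (\<lambda>\<omega>. (Z \<omega> :: real^'n) $ i) \<in> borel_measurable M"
  using measurable_compose[OF _ borel_measurable_nth] by blast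

lemma integrable_mult_of_square_integrable:
  fixes f g :: "'w \<Rightarrow> real"
  assumes "f \<in> borel_measurable M" "g \<in> borel_measurable M"
    and "integrable M (\<lambda>x. (f x)\<^sup>2)" "integrable M (\<lambda>x. (g x)\<^sup>2)"
  shows "integrable M (\<lambda>x. f x * g x)"
proof (rule Bochner_Integration.integrable_bound)
  show "integrable M (\<lambda>x. (f x)\<^sup>2 + (g x)\<^sup>2)" using assms(3,4) by simp
  have "\<bar>f x\<bar> * \<bar>g x\<bar> \<le> (f x)\<^sup>2 + (g x)\<^sup>2" for x
  proof -
    have "2 * \<bar>f x\<bar> * \<bar>g x\<bar> \<le> (f x)\<^sup>2 + (g x)\<^sup>2"
      using sum_squares_bound[of "\<bar>f x\<bar>" "\<bar>g x\<bar>"] by simp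
    moreover have "0 \<le> \<bar>f x\<bar> * \<bar>g x\<bar>" by simp
    ultimately show ?thesis by linarith
  qed
  then show "AE x in M. norm (f x * g x) \<le> norm ((f x)\<^sup>2 + (g x)\<^sup>2)"
    by (simp add: abs_mult)
qed (use assms(1,2) in simp)

lemma integrable_square_diff:
  fixes f g :: "'w \<Rightarrow> real"
  assumes "f \<in> borel_measurable M" "g \<in> borel_measurable M"
    and "integrable M (\<lambda>x. (f x)\<^sup>2)" "integrable M (\<lambda>x. (g x)\<^sup>2)"
  shows "integrable M (\<lambda>x. (f x - g x)\<^sup>2)"
  using integrable_mult_of_square_integrable[OF assms] assms(3,4)
  by (simp add: power2_diff mult.assoc)

lemma second_moment_quadratic_form:
  fixes Z :: "'w \<Rightarrow> real^'n"
  assumes "Z \<in> borel_measurable M" "\<And>i. integrable M (\<lambda>\<omega>. (Z \<omega> $ i)\<^sup>2)"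
  shows "integrable M (\<lambda>\<omega>. (v \<bullet> Z \<omega>)\<^sup>2)"
    and "v \<bullet> (second_moment M Z *v v) = (\<integral>\<omega>. (v \<bullet> Z \<omega>)\<^sup>2 \<partial>M)"
proof -
  have Zij: "integrable M (\<lambda>\<omega>. Z \<omega> $ i * Z \<omega> $ j)" for i j
    using assms borel_measurable_vec_nth by (intro integrable_mult_of_square_integrable)
  have sq: "(v \<bullet> Z \<omega>)\<^sup>2 = (\<Sum>i\<in>UNIV. \<Sum>j\<in>UNIV. v $ i * v $ j * (Z \<omega> $ i * Z \<omega> $ j))" for \<omega>
    by (simp add: inner_vec_def power2_eq_square sum_product algebra_simps)
  show "integrable M (\<lambda>\<omega>. (v \<bullet> Z \<omega>)\<^sup>2)"
    unfolding sq using Zij by simp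
  have "v \<bullet> (second_moment M Z *v v)
      = (\<Sum>i\<in>UNIV. \<Sum>j\<in>UNIV. v $ i * v $ j * (\<integral>\<omega>. Z \<omega> $ i * Z \<omega> $ j \<partial>M))"
    by (simp add: inner_vec_def matrix_vector_mult_def second_moment_def sum_distrib_left
        algebra_simps)
  also have "\<dots> = (\<integral>\<omega>. (v \<bullet> Z \<omega>)\<^sup>2 \<partial>M)"
    unfolding sq using Zij by simp
  finally show "v \<bullet> (second_moment M Z *v v) = (\<integral>\<omega>. (v \<bullet> Z \<omega>)\<^sup>2 \<partial>M)" .
qed

context prob_space
begin

lemma var_matrix_quadratic_form_le:
  fixes W :: "'a \<Rightarrow> real^'n"
  assumes W: "W \<in> borel_measurable M" "\<And>i. integrable M (\<lambda>\<omega>. (W \<omega> $ i)\<^sup>2)"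
  shows "integrable M (\<lambda>\<omega>. (v \<bullet> (c - W \<omega>))\<^sup>2)"
    and "v \<bullet> (var_matrix M W *v v) \<le> (\<integral>\<omega>. (v \<bullet> (c - W \<omega>))\<^sup>2 \<partial>M)"
proof -
  define \<mu> where "\<mu> = mean_vec M W"
  define X where "X = (\<lambda>\<omega>. W \<omega> - \<mu>)"
  define b where "b = v \<bullet> (c - \<mu>)"
  have Wi: "(\<lambda>\<omega>. W \<omega> $ i) \<in> borel_measurable M" "integrable M (\<lambda>\<omega>. W \<omega> $ i)" for i
    using W borel_measurable_vec_nth square_integrable_imp_integrable by blast+
  have X: "X \<in> borel_measurable M" "integrable M (\<lambda>\<omega>. (X \<omega> $ i)\<^sup>2)" for i
    using W(1) integrable_square_diff[of "\<lambda>\<omega>. W \<omega> $ i" M "\<lambda>_. \<mu> $ i"] Wi(1) W(2)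
    by (simp_all add: X_def)
  note qX = second_moment_quadratic_form[OF X, of v]
  have vX: "integrable M (\<lambda>\<omega>. v \<bullet> X \<omega>)" "(\<integral>\<omega>. v \<bullet> X \<omega> \<partial>M) = 0"
    using Wi(2) by (simp_all add: X_def \<mu>_def mean_vec_def inner_vec_def integral_sum
        integral_diff algebra_simps prob_space)
  have sq: "(v \<bullet> (c - W \<omega>))\<^sup>2 = (v \<bullet> X \<omega>)\<^sup>2 - 2 * b * (v \<bullet> X \<omega>) + b\<^sup>2" for \<omega>
    by (simp add: X_def b_def power2_eq_square algebra_simps)
  show "integrable M (\<lambda>\<omega>. (v \<bullet> (c - W \<omega>))\<^sup>2)"
    unfolding sq using qX(1) vX(1) by simp
  have "(\<integral>\<omega>. (v \<bullet> (c - W \<omega>))\<^sup>2 \<partial>M) = v \<bullet> (var_matrix M W *v v) + b\<^sup>2"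
    unfolding sq using qX vX
    by (simp add: var_matrix_def second_moment_def X_def \<mu>_def prob_space)
  then show "v \<bullet> (var_matrix M W *v v) \<le> (\<integral>\<omega>. (v \<bullet> (c - W \<omega>))\<^sup>2 \<partial>M)"
    by simp
qed

lemma expected_square_less_of_loewner_gt:
  fixes W U :: "'a \<Rightarrow> real^'n"
  assumes W: "W \<in> borel_measurable M" "\<And>i. integrable M (\<lambda>\<omega>. (W \<omega> $ i)\<^sup>2)"
    and U: "U \<in> borel_measurable M" "\<And>i. integrable M (\<lambda>\<omega>. (U \<omega> $ i)\<^sup>2)"
    and gt: "loewner_gt (var_matrix M W) (second_moment M (\<lambda>\<omega>. U \<omega> - W \<omega>))"
    and "v \<noteq> 0"
  shows "integrable M (\<lambda>\<omega>. (v \<bullet> (U \<omega> - W \<omega>))\<^sup>2)"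
    and "(\<integral>\<omega>. (v \<bullet> (U \<omega> - W \<omega>))\<^sup>2 \<partial>M) < (\<integral>\<omega>. (v \<bullet> (c - W \<omega>))\<^sup>2 \<partial>M)"
proof -
  have "(\<lambda>\<omega>. U \<omega> - W \<omega>) \<in> borel_measurable M" using U(1) W(1) by simp
  moreover have "integrable M (\<lambda>\<omega>. ((U \<omega> - W \<omega>) $ i)\<^sup>2)" for i
    using integrable_square_diff[OF borel_measurable_vec_nth[OF U(1)]
        borel_measurable_vec_nth[OF W(1)] U(2) W(2)] by simp
  ultimately have q: "integrable M (\<lambda>\<omega>. (v \<bullet> (U \<omega> - W \<omega>))\<^sup>2)"
    "v \<bullet> (second_moment M (\<lambda>\<omega>. U \<omega> - W \<omega>) *v v) = (\<integral>\<omega>. (v \<bullet> (U \<omega> - W \<omega>))\<^sup>2 \<partial>M)"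
    by (rule second_moment_quadratic_form)+
  show "integrable M (\<lambda>\<omega>. (v \<bullet> (U \<omega> - W \<omega>))\<^sup>2)" by (rule q(1))
  have "v \<bullet> (second_moment M (\<lambda>\<omega>. U \<omega> - W \<omega>) *v v) < v \<bullet> (var_matrix M W *v v)"
    using gt \<open>v \<noteq> 0\<close>
    by (simp add: loewner_gt_def pos_def_mat_def matrix_vector_mult_diff_rdistrib inner_diff_right)
  also have "\<dots> \<le> (\<integral>\<omega>. (v \<bullet> (c - W \<omega>))\<^sup>2 \<partial>M)"
    by (rule var_matrix_quadratic_form_le(2)[OF W])
  finally show "(\<integral>\<omega>. (v \<bullet> (U \<omega> - W \<omega>))\<^sup>2 \<partial>M) < (\<integral>\<omega>. (v \<bullet> (c - W \<omega>))\<^sup>2 \<partial>M)"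
    by (simp add: q(2))
qed

lemma nn_integral_sum_squares_less_of_loewner_gt:
  fixes W U :: "'a \<Rightarrow> real^'n" and v :: "'b \<Rightarrow> real^'n"
  assumes W: "W \<in> borel_measurable M" "\<And>i. integrable M (\<lambda>\<omega>. (W \<omega> $ i)\<^sup>2)"
    and U: "U \<in> borel_measurable M" "\<And>i. integrable M (\<lambda>\<omega>. (U \<omega> $ i)\<^sup>2)"
    and gt: "loewner_gt (var_matrix M W) (second_moment M (\<lambda>\<omega>. U \<omega> - W \<omega>))"
    and T: "finite T" "T \<noteq> {}" "\<And>t. t \<in> T \<Longrightarrow> v t \<noteq> 0"
  shows "(\<integral>\<^sup>+\<omega>. ennreal (\<Sum>t\<in>T. (v t \<bullet> (U \<omega> - W \<omega>))\<^sup>2) \<partial>M)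
       < (\<integral>\<^sup>+\<omega>. ennreal (\<Sum>t\<in>T. (v t \<bullet> (c - W \<omega>))\<^sup>2) \<partial>M)"
proof -
  note less = expected_square_less_of_loewner_gt[OF W U gt T(3)]
  note int_c = var_matrix_quadratic_form_le(1)[OF W]
  have "(\<integral>\<^sup>+\<omega>. ennreal (\<Sum>t\<in>T. (v t \<bullet> (U \<omega> - W \<omega>))\<^sup>2) \<partial>M)
      = ennreal (\<Sum>t\<in>T. \<integral>\<omega>. (v t \<bullet> (U \<omega> - W \<omega>))\<^sup>2 \<partial>M)"
    using less(1) by (simp add: nn_integral_eq_integral sum_nonneg integral_sum)
  also have "\<dots> < ennreal (\<Sum>t\<in>T. \<integral>\<omega>. (v t \<bullet> (c - W \<omega>))\<^sup>2 \<partial>M)"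
    using less(2) T(1,2)
    by (subst ennreal_less_iff) (auto intro!: sum_nonneg sum_strict_mono)
  also have "\<dots> = (\<integral>\<^sup>+\<omega>. ennreal (\<Sum>t\<in>T. (v t \<bullet> (c - W \<omega>))\<^sup>2) \<partial>M)"
    using int_c by (simp add: nn_integral_eq_integral sum_nonneg integral_sum)
  finally show ?thesis .
qed

lemma nn_integral_quad_loss_mat_proj_less:
  fixes W U :: "'a \<Rightarrow> real^'n"
  assumes pd: "pos_def_mat Om"
    and W: "W \<in> borel_measurable M" "\<And>i. integrable M (\<lambda>\<omega>. (W \<omega> $ i)\<^sup>2)"
    and U: "U \<in> borel_measurable M" "\<And>i. integrable M (\<lambda>\<omega>. (U \<omega> $ i)\<^sup>2)"
    and gt: "loewner_gt (var_matrix M W) (second_moment M (\<lambda>\<omega>. U \<omega> - W \<omega>))"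
    and T: "mat_orthonormal Om T" "finite T" "T \<noteq> {}"
    and L: "\<And>\<omega>. (\<Sum>t\<in>T. (mat_inner Om t (c - W \<omega>))\<^sup>2) \<le> L \<omega>"
  shows "(\<integral>\<^sup>+\<omega>. ennreal (quad_loss Om (W \<omega>) (W \<omega> + mat_proj Om T (U \<omega> - W \<omega>))) \<partial>M)
       < (\<integral>\<^sup>+\<omega>. ennreal (L \<omega>) \<partial>M)"
proof -
  have "Om *v t \<noteq> 0" if "t \<in> T" for t
    using T(1) that unfolding mat_orthonormal_def mat_inner_def by fastforce
  then have "(\<integral>\<^sup>+\<omega>. ennreal (\<Sum>t\<in>T. ((Om *v t) \<bullet> (U \<omega> - W \<omega>))\<^sup>2) \<partial>M)
      < (\<integral>\<^sup>+\<omega>. ennreal (\<Sum>t\<in>T. ((Om *v t) \<bullet> (c - W \<omega>))\<^sup>2) \<partial>M)"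
    by (rule nn_integral_sum_squares_less_of_loewner_gt[OF W U gt T(2,3)])
  also have "\<dots> \<le> (\<integral>\<^sup>+\<omega>. ennreal (L \<omega>) \<partial>M)"
    using L by (intro nn_integral_mono ennreal_leI) (simp add: mat_inner_eq_inner_left[OF pd])
  finally show ?thesis
    by (simp add: quad_loss_mat_proj[OF T(1,2)] mat_inner_eq_inner_left[OF pd])
qed

end

theorem mainTheorem2:
  fixes M :: "'w measure" and MS :: "'s measure" and MT :: "'t measure"
    and S :: "'w \<Rightarrow> 's" and Th :: "'w \<Rightarrow> 't"
    and ubar :: "'s \<Rightarrow> 't \<Rightarrow> real^'n" and wbar :: "'s \<Rightarrow> real^'n"
    and Om :: "real^'n^'n"
    and E :: "real^'n^'k" and A :: "real^'n^'m" and a :: "real^'m"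
    and e :: "'s \<Rightarrow> real^'k" and f :: "'s \<Rightarrow> 't \<Rightarrow> real^'n"
  assumes "prob_space M"
    and "S \<in> measurable M MS" and "Th \<in> measurable M MT"
    and "wbar \<in> borel_measurable MS"
    and "(\<lambda>\<omega>. ubar (S \<omega>) (Th \<omega>)) \<in> borel_measurable M"
    and "\<forall>i. integrable M (\<lambda>\<omega>. (wbar (S \<omega>) $ i)\<^sup>2)"
    and "\<forall>i. integrable M (\<lambda>\<omega>. (ubar (S \<omega>) (Th \<omega>) $ i)\<^sup>2)"
    and "pos_def_mat Om"
    and "loewner_gt (var_matrix M (\<lambda>\<omega>. wbar (S \<omega>)))
                    (second_moment M (\<lambda>\<omega>. ubar (S \<omega>) (Th \<omega>) - wbar (S \<omega>)))"
    and "CARD('k) < CARD('n)"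
    and "fully_explainable E A a"
    and "\<forall>s t. agent_best Om (ubar s t) (\<lambda>g. A *v g = a \<and> E *v g = e s) (f s t)"
  shows "\<exists>(E' :: real^'n^'k) (e' :: 's \<Rightarrow> real^'k) (f' :: 's \<Rightarrow> 't \<Rightarrow> real^'n).
           e' \<in> borel_measurable MS
         \<and> (\<forall>s t. agent_best Om (ubar s t) (\<lambda>g. E' *v g = e' s) (f' s t))
         \<and> (\<integral>\<^sup>+\<omega>. ennreal (quad_loss Om (wbar (S \<omega>)) (f' (S \<omega>) (Th \<omega>))) \<partial>M)
           < (\<integral>\<^sup>+\<omega>. ennreal (quad_loss Om (wbar (S \<omega>)) (f (S \<omega>) (Th \<omega>))) \<partial>M)"
proof -
  interpret prob_space M by (rule assms(1))
  have feasible: "A *v f s t = a" for s t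
    using assms(12) unfolding agent_best_def by blast
  then obtain a0 where a0: "A *v a0 = a" by blast
  obtain T and E' :: "real^'n^'k" where T: "finite T" "T \<noteq> {}" "mat_orthonormal Om T"
    and ker: "span T = {x. E' *v x = 0}"
    and orth: "\<And>t l. t \<in> T \<Longrightarrow> A *v l = 0 \<Longrightarrow> mat_inner Om t l = 0"
    using orthogonal_explainer_kernel_basis[OF assms(8,11) a0 assms(10)] by metis
  define f' where "f' s t = wbar s + mat_proj Om T (ubar s t - wbar s)" for s t
  have "(\<lambda>s. E' *v wbar s) \<in> borel_measurable MS"
    using measurable_compose[OF assms(4) borel_measurable_continuous_onI[OF
          matrix_vector_mult_linear_continuous_on[of UNIV E']]] by (simp add: o_def)
  moreover have "agent_best Om (ubar s t) (\<lambda>g. E' *v g = E' *v wbar s) (f' s t)" for s t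
    using agent_best_mat_proj[OF assms(8) T(3,1), of "ubar s t" "wbar s"] ker
    by (simp add: f'_def matrix_vector_mult_diff_distrib)
  moreover have "(\<integral>\<^sup>+\<omega>. ennreal (quad_loss Om (wbar (S \<omega>)) (f' (S \<omega>) (Th \<omega>))) \<partial>M)
      < (\<integral>\<^sup>+\<omega>. ennreal (quad_loss Om (wbar (S \<omega>)) (f (S \<omega>) (Th \<omega>))) \<partial>M)"
    unfolding f'_def
    using assms(5-7,9) measurable_compose[OF assms(2,4)] T(1-3)
      quad_loss_restricted_ge[OF assms(8) T(3,1) orth a0 feasible]
    by (intro nn_integral_quad_loss_mat_proj_less[OF assms(8), where c = a0]) auto
  ultimately show ?thesis by blast
qed

end
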